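(* Let $\Gamma$ be a group and $\omega:\Gamma\times\Gamma\to\Gamma$ a group morphism. Then $R(\omega):K(\omega)\to K(\omega)^2$ is a group isomorphism satisfying $\mathrm{ev}_\epsilon=\omega\circ(\mathrm{ev}_\epsilon\times\mathrm{ev}_\epsilon)\circ R(\omega)$, and it is universal with this property: for every group $\widetilde K$, every group isomorphism $\widetilde R:\widetilde K\to\widetilde K^2$ and every group morphism $p:\widetilde K\to\Gamma$ with $p=\omega\circ(p\times p)\circ\widetilde R$, there is a unique group morphism $\psi:\widetilde K\to K(\omega)$ with $\mathrm{ev}_\epsilon\circ\psi=p$ and $R(\omega)\circ\psi=(\psi\times\psi)\circ\widetilde R$.
   Context: $\{0,1\}^*$ denotes the finite words over $\{0,1\}$ with empty word $\epsilon$. $K(\omega)$ is the subgroup of $\prod_{u\in\{0,1\}^*}\Gamma$ (pointwise product) of maps $a:\{0,1\}^*\to\Gamma$ with $a(u)=\omega(a(u0),a(u1))$ for all $u$. $R(\omega)(a):=(R_0(a),R_1(a))$ where $R_i(a)(u):=a(iu)$. $\mathrm{ev}_\epsilon:K(\omega)\to\Gamma$, $a\mapsto a(\epsilon)$. *)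

theory Defs
  imports "HOL-Algebra.Algebra"
begin

text \<open>Words in {0,1}^* are modelled as bool lists, with False = 0 and True = 1.
  The word u0 is u @ [False], the word 0u is False # u; the empty word is [].\<close>

definition Komega :: "('g, 'm) monoid_scheme \<Rightarrow> ('g \<times> 'g \<Rightarrow> 'g) \<Rightarrow> (bool list \<Rightarrow> 'g) monoid" where
  "Komega G \<omega> = \<lparr> carrier = {a. (\<forall>u. a u \<in> carrier G) \<and>
                                  (\<forall>u. a u = \<omega> (a (u @ [False]), a (u @ [True])))},
                   monoid.mult = (\<lambda>a b u. a u \<otimes>\<^bsub>G\<^esub> b u),
                   one = (\<lambda>u. \<one>\<^bsub>G\<^esub>) \<rparr>"

definition Romega :: "(bool list \<Rightarrow> 'g) \<Rightarrow> (bool list \<Rightarrow> 'g) \<times> (bool list \<Rightarrow> 'g)" where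
  "Romega a = ((\<lambda>u. a (False # u)), (\<lambda>u. a (True # u)))"

definition ev_eps :: "(bool list \<Rightarrow> 'g) \<Rightarrow> 'g" where
  "ev_eps a = a []"

end

theory Submission
  imports Defs
begin

text \<open>An element of \<open>K(\<omega>)\<close> is a \<open>\<Gamma>\<close>-labelled infinite binary tree in which every label is \<open>\<omega>\<close>
  of the labels of its two children. \<open>R(\<omega>)\<close> splits such a tree into its two subtrees, and it is
  inverted by grafting two trees \<open>b, c\<close> under a new root labelled \<open>\<omega>(b(\<epsilon>), c(\<epsilon>))\<close>.
  Given \<open>(K', R', p)\<close>, the morphism \<open>\<psi>\<close> labels the node \<open>u\<close> of \<open>\<psi>(x)\<close> by \<open>p\<close> of the element
  reached from \<open>x\<close> by applying the components of \<open>R'\<close> selected by the letters of \<open>u\<close>; the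
  compatibility of \<open>p\<close> with \<open>\<omega>\<close> is exactly what makes this tree lie in \<open>K(\<omega>)\<close>, and the two
  required equations force every label by induction on \<open>u\<close>.\<close>

lemma carrier_Komega:
  "a \<in> carrier (Komega G \<omega>) \<longleftrightarrow>
     (\<forall>u. a u \<in> carrier G) \<and> (\<forall>u. a u = \<omega> (a (u @ [False]), a (u @ [True])))"
  by (simp add: Komega_def)

lemma mult_Komega: "a \<otimes>\<^bsub>Komega G \<omega>\<^esub> b = (\<lambda>u. a u \<otimes>\<^bsub>G\<^esub> b u)"
  by (simp add: Komega_def)

lemma Komega_root:
  assumes "a \<in> carrier (Komega G \<omega>)"
  shows "a [] = \<omega> (a [False], a [True])"
proof -
  have "a [] = \<omega> (a ([] @ [False]), a ([] @ [True]))"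
    using assms unfolding carrier_Komega by blast
  then show ?thesis
    by simp
qed

lemma ev_eps_Komega:
  assumes "a \<in> carrier (Komega G \<omega>)"
  shows "ev_eps a = \<omega> (ev_eps (fst (Romega a)), ev_eps (snd (Romega a)))"
  using Komega_root[OF assms] by (simp add: ev_eps_def Romega_def)

lemma Romega_hom: "Romega \<in> hom (Komega G \<omega>) (Komega G \<omega> \<times>\<times> Komega G \<omega>)"
proof (rule homI)
  fix a assume "a \<in> carrier (Komega G \<omega>)"
  then have "a (d # u) \<in> carrier G \<and> a (d # u) = \<omega> (a (d # u @ [False]), a (d # u @ [True]))"
    for d u
    unfolding carrier_Komega by (metis append_Cons)
  then show "Romega a \<in> carrier (Komega G \<omega> \<times>\<times> Komega G \<omega>)"
    unfolding Romega_def carrier_DirProd mem_Times_iff fst_conv snd_conv carrier_Komega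
    by blast
qed (simp add: Romega_def mult_Komega)

lemma Romega_inj: "inj_on Romega (carrier (Komega G \<omega>))"
proof (rule inj_onI)
  fix a b
  assume a: "a \<in> carrier (Komega G \<omega>)" and b: "b \<in> carrier (Komega G \<omega>)"
    and "Romega a = Romega b"
  then have children: "a (d # u) = b (d # u)" for d u
    by (cases d) (auto simp: Romega_def fun_eq_iff)
  moreover have "a [] = b []"
    using Komega_root[OF a] Komega_root[OF b] children by simp
  ultimately show "a = b"
    by (metis list.exhaust ext)
qed

definition graft :: "('g \<times> 'g \<Rightarrow> 'g) \<Rightarrow> (bool list \<Rightarrow> 'g) \<Rightarrow> (bool list \<Rightarrow> 'g) \<Rightarrow> bool list \<Rightarrow> 'g"
  where "graft \<omega> b c u = (case u of [] \<Rightarrow> \<omega> (b [], c []) | d # v \<Rightarrow> if d then c v else b v)"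

lemma graft_simps [simp]:
  "graft \<omega> b c [] = \<omega> (b [], c [])"
  "graft \<omega> b c (False # v) = b v"
  "graft \<omega> b c (True # v) = c v"
  by (simp_all add: graft_def)

lemma Romega_graft: "Romega (graft \<omega> b c) = (b, c)"
  by (simp add: Romega_def)

lemma graft_in_Komega:
  assumes \<omega>: "\<omega> \<in> carrier G \<times> carrier G \<rightarrow> carrier G"
    and b: "b \<in> carrier (Komega G \<omega>)" and c: "c \<in> carrier (Komega G \<omega>)"
  shows "graft \<omega> b c \<in> carrier (Komega G \<omega>)"
proof -
  have b_at: "b v \<in> carrier G \<and> b v = \<omega> (b (v @ [False]), b (v @ [True]))" for v
    using b unfolding carrier_Komega by blast
  have c_at: "c v \<in> carrier G \<and> c v = \<omega> (c (v @ [False]), c (v @ [True]))" for v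
    using c unfolding carrier_Komega by blast
  have "graft \<omega> b c u \<in> carrier G \<and>
      graft \<omega> b c u = \<omega> (graft \<omega> b c (u @ [False]), graft \<omega> b c (u @ [True]))" for u
  proof (cases u)
    case Nil
    have "(b [], c []) \<in> carrier G \<times> carrier G"
      using b_at c_at by blast
    then have "\<omega> (b [], c []) \<in> carrier G"
      by (rule funcset_mem[OF \<omega>])
    then show ?thesis
      using Nil by simp
  next
    case (Cons d v)
    show ?thesis
      unfolding Cons append_Cons
      by (cases d) (simp_all only: graft_simps simp_thms, rule c_at, rule b_at)
  qed
  then show ?thesis
    unfolding carrier_Komega by blast
qed

lemma Romega_iso:
  assumes "\<omega> \<in> carrier G \<times> carrier G \<rightarrow> carrier G"
  shows "Romega \<in> iso (Komega G \<omega>) (Komega G \<omega> \<times>\<times> Komega G \<omega>)"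
proof -
  have "carrier (Komega G \<omega> \<times>\<times> Komega G \<omega>) \<subseteq> Romega ` carrier (Komega G \<omega>)"
  proof
    fix bc assume "bc \<in> carrier (Komega G \<omega> \<times>\<times> Komega G \<omega>)"
    then obtain b c where "bc = (b, c)" "b \<in> carrier (Komega G \<omega>)" "c \<in> carrier (Komega G \<omega>)"
      by auto
    then show "bc \<in> Romega ` carrier (Komega G \<omega>)"
      using graft_in_Komega[OF assms] Romega_graft by (metis image_eqI)
  qed
  with hom_carrier[OF Romega_hom]
  have "Romega ` carrier (Komega G \<omega>) = carrier (Komega G \<omega> \<times>\<times> Komega G \<omega>)"
    by (rule subset_antisym)
  then show ?thesis
    using Romega_hom Romega_inj unfolding iso_iff by blast
qed

fun walk :: "('k \<Rightarrow> 'k \<times> 'k) \<Rightarrow> bool list \<Rightarrow> 'k \<Rightarrow> 'k" where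
  "walk R [] x = x"
| "walk R (b # u) x = walk R u (if b then snd (R x) else fst (R x))"

lemma walk_snoc:
  "walk R (u @ [b]) x = (if b then snd (R (walk R u x)) else fst (R (walk R u x)))"
  by (induction u arbitrary: x) auto

lemma walk_in_carrier:
  assumes "R \<in> hom K (K \<times>\<times> K)" and "x \<in> carrier K"
  shows "walk R u x \<in> carrier K"
  using assms(2)
proof (induction u arbitrary: x)
  case (Cons b u)
  then show ?case
    using hom_in_carrier[OF assms(1) Cons.prems] by (auto simp: mem_Times_iff)
qed simp

lemma walk_mult:
  assumes "R \<in> hom K (K \<times>\<times> K)" and "x \<in> carrier K" and "y \<in> carrier K"
  shows "walk R u (x \<otimes>\<^bsub>K\<^esub> y) = walk R u x \<otimes>\<^bsub>K\<^esub> walk R u y"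
  using assms(2,3)
proof (induction u arbitrary: x y)
  case (Cons b u)
  have "R x \<in> carrier K \<times> carrier K" "R y \<in> carrier K \<times> carrier K"
    using hom_in_carrier[OF assms(1)] Cons.prems by auto
  moreover have "R (x \<otimes>\<^bsub>K\<^esub> y) = R x \<otimes>\<^bsub>K \<times>\<times> K\<^esub> R y"
    using hom_mult[OF assms(1) Cons.prems] .
  ultimately show ?case
    using Cons.IH by (auto simp: mult_DirProd' mem_Times_iff)
qed simp

definition Komega_lift :: "('k \<Rightarrow> 'k \<times> 'k) \<Rightarrow> ('k \<Rightarrow> 'g) \<Rightarrow> 'k \<Rightarrow> bool list \<Rightarrow> 'g"
  where "Komega_lift R p x u = p (walk R u x)"

lemma ev_eps_Komega_lift: "ev_eps (Komega_lift R p x) = p x"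
  by (simp add: Komega_lift_def ev_eps_def)

lemma Romega_Komega_lift:
  "Romega (Komega_lift R p x) = (Komega_lift R p (fst (R x)), Komega_lift R p (snd (R x)))"
  by (simp add: Komega_lift_def Romega_def fun_eq_iff)

lemma Komega_lift_hom:
  assumes R: "R \<in> hom K (K \<times>\<times> K)" and p: "p \<in> hom K G"
    and p_\<omega>: "\<forall>x \<in> carrier K. p x = \<omega> (p (fst (R x)), p (snd (R x)))"
  shows "Komega_lift R p \<in> hom K (Komega G \<omega>)"
proof (rule homI)
  fix x assume "x \<in> carrier K"
  then show "Komega_lift R p x \<in> carrier (Komega G \<omega>)"
    using walk_in_carrier[OF R] hom_in_carrier[OF p] p_\<omega>
    unfolding carrier_Komega Komega_lift_def walk_snoc
    by (simp only: if_True if_False simp_thms)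
next
  fix x y assume "x \<in> carrier K" "y \<in> carrier K"
  then show "Komega_lift R p (x \<otimes>\<^bsub>K\<^esub> y)
      = Komega_lift R p x \<otimes>\<^bsub>Komega G \<omega>\<^esub> Komega_lift R p y"
    using walk_mult[OF R] walk_in_carrier[OF R] hom_mult[OF p]
    by (simp add: mult_Komega Komega_lift_def fun_eq_iff)
qed

lemma Komega_lift_unique:
  assumes R: "R \<in> carrier K \<rightarrow> carrier K \<times> carrier K"
    and ev: "\<forall>x \<in> carrier K. ev_eps (\<psi> x) = p x"
    and split: "\<forall>x \<in> carrier K. Romega (\<psi> x) = (\<psi> (fst (R x)), \<psi> (snd (R x)))"
    and "x \<in> carrier K"
  shows "\<psi> x = Komega_lift R p x"
proof
  fix u show "\<psi> x u = Komega_lift R p x u"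
    using \<open>x \<in> carrier K\<close>
  proof (induction u arbitrary: x)
    case Nil
    then show ?case
      using ev by (simp add: ev_eps_def Komega_lift_def)
  next
    case (Cons d u)
    have "Romega (\<psi> x) = (\<psi> (fst (R x)), \<psi> (snd (R x)))"
      using split Cons.prems by blast
    then have "\<psi> x (False # u) = \<psi> (fst (R x)) u" "\<psi> x (True # u) = \<psi> (snd (R x)) u"
      unfolding Romega_def by (simp_all add: fun_eq_iff)
    moreover have "fst (R x) \<in> carrier K" "snd (R x) \<in> carrier K"
      using funcset_mem[OF R Cons.prems] by auto
    ultimately show ?case
      using Cons.IH by (cases d) (simp_all add: Komega_lift_def)
  qed
qed

lemma Komega_universal:
  assumes R: "R \<in> hom K (K \<times>\<times> K)" and p: "p \<in> hom K G"
    and p_\<omega>: "\<forall>x \<in> carrier K. p x = \<omega> (p (fst (R x)), p (snd (R x)))"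
  shows "\<exists>\<psi>. \<psi> \<in> hom K (Komega G \<omega>)
      \<and> (\<forall>x \<in> carrier K. ev_eps (\<psi> x) = p x)
      \<and> (\<forall>x \<in> carrier K. Romega (\<psi> x) = (\<psi> (fst (R x)), \<psi> (snd (R x))))
      \<and> (\<forall>\<psi>'. \<psi>' \<in> hom K (Komega G \<omega>)
             \<and> (\<forall>x \<in> carrier K. ev_eps (\<psi>' x) = p x)
             \<and> (\<forall>x \<in> carrier K. Romega (\<psi>' x) = (\<psi>' (fst (R x)), \<psi>' (snd (R x))))
             \<longrightarrow> (\<forall>x \<in> carrier K. \<psi>' x = \<psi> x))"
proof (intro exI[of _ "Komega_lift R p"] conjI ballI allI impI)
  show "Komega_lift R p \<in> hom K (Komega G \<omega>)"
    using R p p_\<omega> by (rule Komega_lift_hom)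
next
  have R_carrier: "R \<in> carrier K \<rightarrow> carrier K \<times> carrier K"
    using R by (simp add: hom_def)
  fix \<psi> x
  assume "\<psi> \<in> hom K (Komega G \<omega>)
      \<and> (\<forall>x \<in> carrier K. ev_eps (\<psi> x) = p x)
      \<and> (\<forall>x \<in> carrier K. Romega (\<psi> x) = (\<psi> (fst (R x)), \<psi> (snd (R x))))"
    and "x \<in> carrier K"
  then show "\<psi> x = Komega_lift R p x"
    using Komega_lift_unique[OF R_carrier] by blast
qed (simp_all only: ev_eps_Komega_lift Romega_Komega_lift)

theorem mainTheorem11:
  fixes G :: "('g, 'm) monoid_scheme"
    and \<omega> :: "'g \<times> 'g \<Rightarrow> 'g"
  assumes "group G"
    and "\<omega> \<in> hom (G \<times>\<times> G) G"
  shows "Romega \<in> iso (Komega G \<omega>) (Komega G \<omega> \<times>\<times> Komega G \<omega>)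
    \<and> (\<forall>a \<in> carrier (Komega G \<omega>).
          ev_eps a = \<omega> (ev_eps (fst (Romega a)), ev_eps (snd (Romega a))))
    \<and> (\<forall>(Kt :: ('k, 'n) monoid_scheme) Rt p.
          group Kt \<longrightarrow> Rt \<in> iso Kt (Kt \<times>\<times> Kt) \<longrightarrow> p \<in> hom Kt G \<longrightarrow>
          (\<forall>x \<in> carrier Kt. p x = \<omega> (p (fst (Rt x)), p (snd (Rt x)))) \<longrightarrow>
          (\<exists>\<psi>. \<psi> \<in> hom Kt (Komega G \<omega>)
               \<and> (\<forall>x \<in> carrier Kt. ev_eps (\<psi> x) = p x)
               \<and> (\<forall>x \<in> carrier Kt. Romega (\<psi> x) = (\<psi> (fst (Rt x)), \<psi> (snd (Rt x))))
               \<and> (\<forall>\<psi>'. \<psi>' \<in> hom Kt (Komega G \<omega>)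
                      \<and> (\<forall>x \<in> carrier Kt. ev_eps (\<psi>' x) = p x)
                      \<and> (\<forall>x \<in> carrier Kt. Romega (\<psi>' x) = (\<psi>' (fst (Rt x)), \<psi>' (snd (Rt x))))
                      \<longrightarrow> (\<forall>x \<in> carrier Kt. \<psi>' x = \<psi> x))))"
proof (intro conjI ballI allI impI)
  show "Romega \<in> iso (Komega G \<omega>) (Komega G \<omega> \<times>\<times> Komega G \<omega>)"
    using assms(2) by (intro Romega_iso) (simp add: hom_def)
qed (erule ev_eps_Komega, rule Komega_universal[OF iso_imp_homomorphism])

end
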